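(* Let $D\subset\mathbb{C}^k$ be open and let $\varphi,\psi$ be functions on $\mathbb{C}^k$ that are plurisubharmonic on $D$ with $\|\varphi\|_{L^\infty}\leq 1/2$ and $\|\psi\|_{L^\infty}\leq 1/2$. For $j=1,2$ set $\varphi_j^+:=\varphi^2+j\varphi+6$, $\varphi_j^-:=\varphi^2+j\varphi-6$, $\psi_j^+:=\psi^2+j\psi+6$, $\psi_j^-:=-\psi^2-j\psi+6$, and for $j,l\in\{1,2\}$ define on $\mathbb{C}^k\times\mathbb{C}^k$ \[\Phi_{jl}^+(z,w):=\varphi_j^+(z)\psi_l^+(w),\qquad \Phi_{jl}^-(z,w):=\varphi_j^-(z)\psi_l^-(w).\] Then the functions $\Phi_{jl}^\pm$ are all plurisubharmonic on $D\times D$. *)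

theory Defs
  imports "HOL-Analysis.Analysis"
begin

text \<open>C^k is modelled as the type complex^'n (k = CARD('n)); the product C^k x C^k,
  i.e. C^(2k), is modelled as complex^('n + 'n).\<close>

definition usc_on :: "(complex^'m) set \<Rightarrow> (complex^'m \<Rightarrow> real) \<Rightarrow> bool" where
  "usc_on D u \<longleftrightarrow>
     (\<forall>a\<in>D. \<forall>e>0. \<exists>d>0. \<forall>x\<in>D. dist x a < d \<longrightarrow> u x < u a + e)"

text \<open>For a finite-valued usc function the
  circle integral lies in [-\<infinity>,\<infinity>) and the inequality forces it to be finite, hence
  integrability is part of the condition.\<close>
definition psh_on :: "(complex^'m) set \<Rightarrow> (complex^'m \<Rightarrow> real) \<Rightarrow> bool" where
  "psh_on D u \<longleftrightarrow> usc_on D u \<and>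
     (\<forall>a b. (\<forall>\<zeta>. cmod \<zeta> \<le> 1 \<longrightarrow> a + \<zeta> *s b \<in> D) \<longrightarrow>
        set_integrable lborel {0..2*pi} (\<lambda>t. u (a + exp (\<i> * complex_of_real t) *s b)) \<and>
        u a \<le> (1 / (2*pi)) * (LINT t:{0..2*pi}|lborel. u (a + exp (\<i> * complex_of_real t) *s b)))"

definition vfst :: "complex^('n + 'n) \<Rightarrow> complex^'n" where
  "vfst v = (\<chi> i. v $ Inl i)"
definition vsnd :: "complex^('n + 'n) \<Rightarrow> complex^'n" where
  "vsnd v = (\<chi> i. v $ Inr i)"

end

theory Submission
  imports Defs
begin

text \<open>Each of the four functions has the form \<open>F (\<phi> z) (\<psi> w)\<close>, where the polynomial \<open>F\<close> is
  continuous and, on the square \<open>[-1/2, 1/2]\<^sup>2\<close> containing the values of \<open>\<phi>\<close> and \<open>\<psi>\<close>, nondecreasing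
  in both variables and above each of its tangent planes. Composed with the projections,
  \<open>\<phi>\<close> and \<open>\<psi>\<close> remain plurisubharmonic on \<open>D \<times> D\<close>. Upper semicontinuity of the composite
  follows from monotonicity and continuity of \<open>F\<close>. On a disc, with \<open>m\<close> denoting circle means,
  \<open>F (\<phi> a) (\<psi> a) \<le> F (m \<phi>) (m \<psi>) \<le> m (F \<phi> \<psi>)\<close>: the first step by monotonicity, the second
  by integrating the supporting plane at \<open>(m \<phi>, m \<psi>)\<close> (Jensen's inequality).\<close>

lemma set_integrable_Icc_const: "set_integrable lborel {a..b::real} (\<lambda>_. c::real)"
  by (simp add: set_integrable_def emeasure_lborel_Icc_eq)

lemma set_integrable_Icc_continuous_comp:
  fixes f g :: "real \<Rightarrow> real" and F :: "real \<Rightarrow> real \<Rightarrow> real"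
  assumes f: "set_integrable lborel {a..b} f" and g: "set_integrable lborel {a..b} g"
    and F: "continuous_on UNIV (\<lambda>p. F (fst p) (snd p))"
    and bound: "\<And>t. t \<in> {a..b} \<Longrightarrow> \<bar>F (f t) (g t)\<bar> \<le> B"
  shows "set_integrable lborel {a..b} (\<lambda>t. F (f t) (g t))"
proof -
  let ?M = "restrict_space lborel {a..b}"
  have "f \<in> borel_measurable ?M" "g \<in> borel_measurable ?M"
    using f g by (auto simp: set_integrable_eq dest: borel_measurable_integrable)
  then have "(\<lambda>t. (f t, g t)) \<in> borel_measurable ?M"
    by (rule borel_measurable_Pair)
  from measurable_compose[OF this borel_measurable_continuous_onI[OF F]]
  have "(\<lambda>t. F (f t) (g t)) \<in> borel_measurable ?M"
    by simp
  then have meas: "set_borel_measurable lborel {a..b} (\<lambda>t. F (f t) (g t))"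
    unfolding set_borel_measurable_def by (subst borel_measurable_restrict_space_iff[symmetric]) auto
  show ?thesis
  proof (rule set_integrable_bound[OF set_integrable_Icc_const meas])
    show "AE t in lborel. t \<in> {a..b} \<longrightarrow> norm (F (f t) (g t)) \<le> norm B"
      using bound by (intro AE_I2) force
  qed
qed

definition circle_mean :: "(real \<Rightarrow> real) \<Rightarrow> real" where
  "circle_mean f = (1 / (2*pi)) * (LINT t:{0..2*pi}|lborel. f t)"

lemma circle_mean_const [simp]: "circle_mean (\<lambda>_. c) = c"
  by (simp add: circle_mean_def set_integral_const emeasure_lborel_Icc_eq)

lemma circle_mean_mono:
  assumes "set_integrable lborel {0..2*pi} f" "set_integrable lborel {0..2*pi} g"
    and "\<And>t. t \<in> {0..2*pi} \<Longrightarrow> f t \<le> g t"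
  shows "circle_mean f \<le> circle_mean g"
  unfolding circle_mean_def using set_integral_mono[OF assms] by (simp add: divide_right_mono)

lemma circle_mean_affine:
  assumes "set_integrable lborel {0..2*pi} f" "set_integrable lborel {0..2*pi} g"
  shows "circle_mean (\<lambda>t. c + p * f t + q * g t) = c + p * circle_mean f + q * circle_mean g"
proof -
  have "circle_mean (\<lambda>t. c + p * f t + q * g t) =
      circle_mean (\<lambda>_. c) + p * circle_mean f + q * circle_mean g"
    using assms set_integrable_Icc_const[of 0 "2*pi" c]
    by (simp add: circle_mean_def algebra_simps del: circle_mean_const)
  then show ?thesis by simp
qed

lemma circle_mean_in_Icc:
  assumes "set_integrable lborel {0..2*pi} f" and "\<And>t. t \<in> {0..2*pi} \<Longrightarrow> f t \<in> {lo..hi}"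
  shows "circle_mean f \<in> {lo..hi}"
  using circle_mean_mono[OF set_integrable_Icc_const assms(1), of lo]
    circle_mean_mono[OF assms(1) set_integrable_Icc_const, of hi] assms(2)
  by auto

lemma circle_mean_ge_affine_minorant:
  assumes f: "set_integrable lborel {0..2*pi} f" and g: "set_integrable lborel {0..2*pi} g"
    and h: "set_integrable lborel {0..2*pi} h"
    and minorant: "\<And>t. t \<in> {0..2*pi} \<Longrightarrow>
      c + p * (f t - circle_mean f) + q * (g t - circle_mean g) \<le> h t"
  shows "c \<le> circle_mean h"
proof -
  let ?c' = "c - p * circle_mean f - q * circle_mean g"
  have "c = circle_mean (\<lambda>t. ?c' + p * f t + q * g t)"
    by (simp add: circle_mean_affine[OF f g])
  also have "\<dots> \<le> circle_mean h"
  proof (rule circle_mean_mono[OF _ h])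
    show "set_integrable lborel {0..2*pi} (\<lambda>t. ?c' + p * f t + q * g t)"
      using f g set_integrable_Icc_const[of 0 "2*pi" ?c'] by simp
  qed (use minorant in \<open>simp add: algebra_simps\<close>)
  finally show ?thesis .
qed

lemma psh_on_iff_circle_mean:
  "psh_on D u \<longleftrightarrow> usc_on D u \<and>
     (\<forall>a b. (\<forall>\<zeta>. cmod \<zeta> \<le> 1 \<longrightarrow> a + \<zeta> *s b \<in> D) \<longrightarrow>
        set_integrable lborel {0..2*pi} (\<lambda>t. u (a + exp (\<i> * of_real t) *s b)) \<and>
        u a \<le> circle_mean (\<lambda>t. u (a + exp (\<i> * of_real t) *s b)))"
  unfolding psh_on_def circle_mean_def ..

lemma usc_on_subset: "usc_on D u \<Longrightarrow> E \<subseteq> D \<Longrightarrow> usc_on E u"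
  unfolding usc_on_def by (metis subsetD)

lemma psh_on_subset:
  assumes psh: "psh_on D u" and "E \<subseteq> D"
  shows "psh_on E u"
  unfolding psh_on_iff_circle_mean
proof (intro conjI allI impI)
  show "usc_on E u"
    using psh \<open>E \<subseteq> D\<close> unfolding psh_on_def by (blast intro: usc_on_subset)
  fix a b assume "\<forall>\<zeta>. cmod \<zeta> \<le> 1 \<longrightarrow> a + \<zeta> *s b \<in> E"
  with \<open>E \<subseteq> D\<close> have "\<forall>\<zeta>. cmod \<zeta> \<le> 1 \<longrightarrow> a + \<zeta> *s b \<in> D"
    by blast
  with psh show "set_integrable lborel {0..2*pi} (\<lambda>t. u (a + exp (\<i> * of_real t) *s b))"
    and "u a \<le> circle_mean (\<lambda>t. u (a + exp (\<i> * of_real t) *s b))"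
    unfolding psh_on_iff_circle_mean by simp_all
qed

lemma psh_on_linear_pullback:
  fixes L :: "complex^'k \<Rightarrow> complex^'m"
  assumes psh: "psh_on D u" and cont: "continuous_on UNIV L"
    and linear: "\<And>a \<zeta> b. L (a + \<zeta> *s b) = L a + \<zeta> *s L b"
  shows "psh_on (L -` D) (\<lambda>v. u (L v))"
  unfolding psh_on_iff_circle_mean
proof (intro conjI allI impI)
  show "usc_on (L -` D) (\<lambda>v. u (L v))"
    unfolding usc_on_def
  proof (intro ballI allI impI)
    fix a e assume "a \<in> L -` D" "(e::real) > 0"
    then obtain d where "d > 0" and d: "\<And>z. z \<in> D \<Longrightarrow> dist z (L a) < d \<Longrightarrow> u z < u (L a) + e"
      using psh unfolding psh_on_def usc_on_def by blast
    then obtain \<delta> where "\<delta> > 0" and "\<And>x. dist x a < \<delta> \<Longrightarrow> dist (L x) (L a) < d"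
      using cont unfolding continuous_on_iff by blast
    with d show "\<exists>\<delta>>0. \<forall>x\<in>L -` D. dist x a < \<delta> \<longrightarrow> u (L x) < u (L a) + e"
      by (metis vimageE)
  qed
next
  fix a b assume "\<forall>\<zeta>. cmod \<zeta> \<le> 1 \<longrightarrow> a + \<zeta> *s b \<in> L -` D"
  then have "\<forall>\<zeta>. cmod \<zeta> \<le> 1 \<longrightarrow> L a + \<zeta> *s L b \<in> D"
    by (simp add: linear)
  then show "set_integrable lborel {0..2*pi} (\<lambda>t. u (L (a + exp (\<i> * of_real t) *s b)))"
    and "u (L a) \<le> circle_mean (\<lambda>t. u (L (a + exp (\<i> * of_real t) *s b)))"
    using psh unfolding psh_on_iff_circle_mean linear by simp_all
qed

lemma vfst_add_scale: "vfst (a + \<zeta> *s b) = vfst a + \<zeta> *s vfst b"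
  by (simp add: vfst_def vec_eq_iff)

lemma continuous_on_vfst: "continuous_on UNIV vfst"
  unfolding vfst_def by (intro continuous_intros)

lemma vsnd_add_scale: "vsnd (a + \<zeta> *s b) = vsnd a + \<zeta> *s vsnd b"
  by (simp add: vsnd_def vec_eq_iff)

lemma continuous_on_vsnd: "continuous_on UNIV vsnd"
  unfolding vsnd_def by (intro continuous_intros)

lemma psh_on_vfst: "psh_on D u \<Longrightarrow> psh_on (vfst -` D) (\<lambda>v. u (vfst v))"
  by (rule psh_on_linear_pullback[OF _ continuous_on_vfst vfst_add_scale])

lemma psh_on_vsnd: "psh_on D u \<Longrightarrow> psh_on (vsnd -` D) (\<lambda>v. u (vsnd v))"
  by (rule psh_on_linear_pullback[OF _ continuous_on_vsnd vsnd_add_scale])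

lemma usc_on_monotone_comp:
  fixes U W :: "complex^'m \<Rightarrow> real" and F :: "real \<Rightarrow> real \<Rightarrow> real"
  assumes usc: "usc_on E U" "usc_on E W"
    and range: "\<And>z. z \<in> E \<Longrightarrow> U z \<in> {lo..hi}" "\<And>z. z \<in> E \<Longrightarrow> W z \<in> {lo..hi}"
    and cont: "continuous_on UNIV (\<lambda>p. F (fst p) (snd p))"
    and mono: "\<And>x y x' y'. x \<in> {lo..hi} \<Longrightarrow> y \<in> {lo..hi} \<Longrightarrow> x' \<in> {lo..hi} \<Longrightarrow> y' \<in> {lo..hi}
       \<Longrightarrow> x \<le> x' \<Longrightarrow> y \<le> y' \<Longrightarrow> F x y \<le> F x' y'"
  shows "usc_on E (\<lambda>z. F (U z) (W z))"
  unfolding usc_on_def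
proof (intro ballI allI impI)
  fix a e assume "a \<in> E" "(e::real) > 0"
  have "\<exists>\<delta>>0. \<forall>p. dist p (U a, W a) < \<delta> \<longrightarrow> dist (F (fst p) (snd p)) (F (U a) (W a)) < e"
    using cont \<open>e > 0\<close> unfolding continuous_on_iff by (metis UNIV_I fst_conv snd_conv)
  then obtain \<delta> where "\<delta> > 0" and
    \<delta>: "\<And>p. dist p (U a, W a) < \<delta> \<Longrightarrow> dist (F (fst p) (snd p)) (F (U a) (W a)) < e"
    by auto
  have "\<delta>/2 > 0"
    using \<open>\<delta> > 0\<close> by simp
  then obtain d1 d2 where "d1 > 0" "d2 > 0"
    and d1: "\<forall>z\<in>E. dist z a < d1 \<longrightarrow> U z < U a + \<delta>/2"
    and d2: "\<forall>z\<in>E. dist z a < d2 \<longrightarrow> W z < W a + \<delta>/2"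
    using usc \<open>a \<in> E\<close> unfolding usc_on_def by blast
  show "\<exists>d>0. \<forall>z\<in>E. dist z a < d \<longrightarrow> F (U z) (W z) < F (U a) (W a) + e"
  proof (intro exI[of _ "min d1 d2"] conjI ballI impI)
    fix z assume "z \<in> E" "dist z a < min d1 d2"
    define x' where "x' = max (U z) (U a)"
    define y' where "y' = max (W z) (W a)"
    have F_le: "F (U z) (W z) \<le> F x' y'"
      using range[OF \<open>z \<in> E\<close>] range[OF \<open>a \<in> E\<close>]
      by (intro mono) (auto simp: x'_def y'_def le_max_iff_disj)
    have "dist (x', y') (U a, W a) \<le> dist x' (U a) + dist y' (W a)"
      by (simp add: dist_Pair_Pair sqrt_sum_squares_le_sum_abs dist_real_def)
    moreover have "U z < U a + \<delta>/2" "W z < W a + \<delta>/2"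
      using d1 d2 \<open>z \<in> E\<close> \<open>dist z a < min d1 d2\<close> by auto
    ultimately have "dist (x', y') (U a, W a) < \<delta>"
      using \<open>\<delta> > 0\<close> by (simp add: x'_def y'_def dist_real_def)
    then show "F (U z) (W z) < F (U a) (W a) + e"
      using \<delta>[of "(x', y')"] F_le by (simp add: dist_real_def)
  qed (use \<open>d1 > 0\<close> \<open>d2 > 0\<close> in simp)
qed

lemma psh_on_monotone_comp:
  fixes U W :: "complex^'m \<Rightarrow> real" and F :: "real \<Rightarrow> real \<Rightarrow> real"
  assumes psh: "psh_on E U" "psh_on E W"
    and range: "\<And>z. z \<in> E \<Longrightarrow> U z \<in> {lo..hi}" "\<And>z. z \<in> E \<Longrightarrow> W z \<in> {lo..hi}"
    and cont: "continuous_on UNIV (\<lambda>p. F (fst p) (snd p))"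
    and mono: "\<And>x y x' y'. x \<in> {lo..hi} \<Longrightarrow> y \<in> {lo..hi} \<Longrightarrow> x' \<in> {lo..hi} \<Longrightarrow> y' \<in> {lo..hi}
       \<Longrightarrow> x \<le> x' \<Longrightarrow> y \<le> y' \<Longrightarrow> F x y \<le> F x' y'"
    and supporting: "\<And>x0 y0. x0 \<in> {lo..hi} \<Longrightarrow> y0 \<in> {lo..hi} \<Longrightarrow> \<exists>p q. \<forall>x\<in>{lo..hi}. \<forall>y\<in>{lo..hi}.
       F x0 y0 + p * (x - x0) + q * (y - y0) \<le> F x y"
  shows "psh_on E (\<lambda>z. F (U z) (W z))"
  unfolding psh_on_iff_circle_mean
proof (intro conjI allI impI)
  show "usc_on E (\<lambda>z. F (U z) (W z))"
    using psh by (intro usc_on_monotone_comp[OF _ _ range cont mono]) (simp_all add: psh_on_def)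
next
  fix a b assume disc: "\<forall>\<zeta>. cmod \<zeta> \<le> 1 \<longrightarrow> a + \<zeta> *s b \<in> E"
  define f where "f t = U (a + exp (\<i> * of_real t) *s b)" for t
  define g where "g t = W (a + exp (\<i> * of_real t) *s b)" for t
  have f: "set_integrable lborel {0..2*pi} f" "U a \<le> circle_mean f"
    using psh(1) disc unfolding psh_on_iff_circle_mean f_def by simp_all
  have g: "set_integrable lborel {0..2*pi} g" "W a \<le> circle_mean g"
    using psh(2) disc unfolding psh_on_iff_circle_mean g_def by simp_all
  have "a \<in> E"
    using disc[rule_format, of 0] by simp
  have "a + exp (\<i> * of_real t) *s b \<in> E" for t
    using disc by simp
  then have f_range: "f t \<in> {lo..hi}" and g_range: "g t \<in> {lo..hi}" for t
    unfolding f_def g_def using range by blast+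
  have "\<bar>F (f t) (g t)\<bar> \<le> \<bar>F lo lo\<bar> + \<bar>F hi hi\<bar>" for t
  proof -
    have "F lo lo \<le> F (f t) (g t)" "F (f t) (g t) \<le> F hi hi"
      using f_range[of t] g_range[of t] by (auto intro!: mono)
    then show ?thesis by linarith
  qed
  then have Ffg: "set_integrable lborel {0..2*pi} (\<lambda>t. F (f t) (g t))"
    by (intro set_integrable_Icc_continuous_comp[OF f(1) g(1) cont])
  then show "set_integrable lborel {0..2*pi}
      (\<lambda>t. F (U (a + exp (\<i> * of_real t) *s b)) (W (a + exp (\<i> * of_real t) *s b)))"
    by (simp add: f_def g_def)
  have mean_range: "circle_mean f \<in> {lo..hi}" "circle_mean g \<in> {lo..hi}"
    using circle_mean_in_Icc[OF f(1) f_range] circle_mean_in_Icc[OF g(1) g_range] by simp_all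
  then obtain p q where pq: "\<forall>x\<in>{lo..hi}. \<forall>y\<in>{lo..hi}.
      F (circle_mean f) (circle_mean g) + p * (x - circle_mean f) + q * (y - circle_mean g) \<le> F x y"
    using supporting by blast
  have "F (U a) (W a) \<le> F (circle_mean f) (circle_mean g)"
    using range \<open>a \<in> E\<close> mean_range f(2) g(2) by (intro mono) auto
  also have "\<dots> \<le> circle_mean (\<lambda>t. F (f t) (g t))"
    using pq f_range g_range by (intro circle_mean_ge_affine_minorant[OF f(1) g(1) Ffg]) blast
  finally show "F (U a) (W a) \<le> circle_mean
      (\<lambda>t. F (U (a + exp (\<i> * of_real t) *s b)) (W (a + exp (\<i> * of_real t) *s b)))"
    by (simp add: f_def g_def)
qed

text \<open>With \<open>h = x - x0\<close> and \<open>P x - P x0 = h * s\<close> (similarly \<open>k\<close>, \<open>t\<close> for \<open>Q\<close>), the gap between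
  \<open>P x * Q y\<close> and its tangent plane is \<open>(h * s) * (k * t) + e2 * P x0 * k\<^sup>2 + e1 * Q y0 * h\<^sup>2\<close>;
  the bounds on the slopes and the AM-GM inequality let the last two terms absorb the first.\<close>

lemma quadratic_product_above_tangent:
  fixes e1 b1 c1 e2 b2 c2 x0 y0 x y K :: real
  defines "P \<equiv> \<lambda>x. e1 * x\<^sup>2 + b1 * x + c1" and "Q \<equiv> \<lambda>y. e2 * y\<^sup>2 + b2 * y + c2"
  assumes slope_x: "\<bar>e1 * (x + x0) + b1\<bar> \<le> K" and slope_y: "\<bar>e2 * (y + y0) + b2\<bar> \<le> K"
    and curv_x: "K\<^sup>2 \<le> 2 * e2 * P x0" and curv_y: "K\<^sup>2 \<le> 2 * e1 * Q y0"
  shows "P x0 * Q y0 + (2 * e1 * x0 + b1) * Q y0 * (x - x0) + P x0 * (2 * e2 * y0 + b2) * (y - y0)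
    \<le> P x * Q y"
proof -
  define h k s t where "h = x - x0" and "k = y - y0"
    and "s = e1 * (x + x0) + b1" and "t = e2 * (y + y0) + b2"
  have remainder: "P x * Q y - (P x0 * Q y0 + (2 * e1 * x0 + b1) * Q y0 * (x - x0)
      + P x0 * (2 * e2 * y0 + b2) * (y - y0))
    = (h * s) * (k * t) + e2 * P x0 * k\<^sup>2 + e1 * Q y0 * h\<^sup>2"
    unfolding P_def Q_def h_def k_def s_def t_def by algebra
  have "\<bar>s * t\<bar> \<le> K\<^sup>2"
    unfolding abs_mult power2_eq_square using slope_x slope_y s_def t_def
    by (intro mult_mono) auto
  then have "\<bar>(h * s) * (k * t)\<bar> \<le> K\<^sup>2 * (\<bar>h\<bar> * \<bar>k\<bar>)"
    using mult_right_mono[of "\<bar>s * t\<bar>" "K\<^sup>2" "\<bar>h\<bar> * \<bar>k\<bar>"] by (simp add: abs_mult ac_simps)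
  also have "\<dots> \<le> K\<^sup>2 * ((h\<^sup>2 + k\<^sup>2) / 2)"
    using sum_squares_bound[of "\<bar>h\<bar>" "\<bar>k\<bar>"] by (intro mult_left_mono) auto
  also have "\<dots> \<le> e2 * P x0 * k\<^sup>2 + e1 * Q y0 * h\<^sup>2"
    using mult_right_mono[OF curv_x, of "k\<^sup>2"] mult_right_mono[OF curv_y, of "h\<^sup>2"]
    by (simp add: algebra_simps)
  finally show ?thesis
    using remainder by linarith
qed

lemma quadratic_bounds_on_half_interval:
  fixes c x :: real
  assumes "c \<in> {1..2}" "x \<in> {-1/2..1/2}"
  shows "x\<^sup>2 + c * x \<in> {-1..5/4}"
proof -
  have "\<bar>x\<bar> \<le> 1/2"
    using assms by auto
  then have "\<bar>c * x\<bar> \<le> 2 * (1/2)"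
    unfolding abs_mult using assms by (intro mult_mono) auto
  moreover have "x\<^sup>2 \<le> 1/4"
    using \<open>\<bar>x\<bar> \<le> 1/2\<close> abs_le_square_iff[of x "1/2"] by (simp add: power_divide)
  ultimately show ?thesis
    using zero_le_power2[of x] unfolding atLeastAtMost_iff abs_le_iff by linarith
qed

lemma quadratic_mono_on_half_interval:
  fixes c x x' :: real
  assumes "1 \<le> c" "x \<in> {-1/2..1/2}" "x' \<in> {-1/2..1/2}" "x \<le> x'"
  shows "x\<^sup>2 + c * x \<le> x'\<^sup>2 + c * x'"
proof -
  have "0 \<le> (x' - x) * (x' + x + c)"
    using assms by (intro mult_nonneg_nonneg) auto
  then show ?thesis
    by (simp add: algebra_simps power2_eq_square)
qed

lemma product_plus_mono:
  fixes j l x y x' y' :: real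
  assumes "j \<in> {1..2}" "l \<in> {1..2}"
    and "x \<in> {-1/2..1/2}" "y \<in> {-1/2..1/2}" "x' \<in> {-1/2..1/2}" "y' \<in> {-1/2..1/2}"
    and "x \<le> x'" "y \<le> y'"
  shows "(x\<^sup>2 + j * x + 6) * (y\<^sup>2 + l * y + 6) \<le> (x'\<^sup>2 + j * x' + 6) * (y'\<^sup>2 + l * y' + 6)"
proof (rule mult_mono)
  show "x\<^sup>2 + j * x + 6 \<le> x'\<^sup>2 + j * x' + 6" "y\<^sup>2 + l * y + 6 \<le> y'\<^sup>2 + l * y' + 6"
    using quadratic_mono_on_half_interval assms by simp_all
  show "0 \<le> x'\<^sup>2 + j * x' + 6" "0 \<le> y\<^sup>2 + l * y + 6"
    using quadratic_bounds_on_half_interval[of j x'] quadratic_bounds_on_half_interval[of l y] assms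
    by auto
qed

lemma product_minus_mono:
  fixes j l x y x' y' :: real
  assumes "j \<in> {1..2}" "l \<in> {1..2}"
    and "x \<in> {-1/2..1/2}" "y \<in> {-1/2..1/2}" "x' \<in> {-1/2..1/2}" "y' \<in> {-1/2..1/2}"
    and "x \<le> x'" "y \<le> y'"
  shows "(x\<^sup>2 + j * x - 6) * (- y\<^sup>2 - l * y + 6) \<le> (x'\<^sup>2 + j * x' - 6) * (- y'\<^sup>2 - l * y' + 6)"
proof -
  have x_le: "x\<^sup>2 + j * x - 6 \<le> x'\<^sup>2 + j * x' - 6" and y_ge: "- y'\<^sup>2 - l * y' + 6 \<le> - y\<^sup>2 - l * y + 6"
    using quadratic_mono_on_half_interval[of j x x'] quadratic_mono_on_half_interval[of l y y'] assms
    by simp_all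
  have "x'\<^sup>2 + j * x' - 6 \<le> 0" "0 \<le> - y\<^sup>2 - l * y + 6"
    using quadratic_bounds_on_half_interval[of j x'] quadratic_bounds_on_half_interval[of l y] assms
    by auto
  then have "(x\<^sup>2 + j * x - 6) * (- y\<^sup>2 - l * y + 6) \<le> (x'\<^sup>2 + j * x' - 6) * (- y\<^sup>2 - l * y + 6)"
    using x_le by (intro mult_right_mono)
  also have "\<dots> \<le> (x'\<^sup>2 + j * x' - 6) * (- y'\<^sup>2 - l * y' + 6)"
    using y_ge \<open>x'\<^sup>2 + j * x' - 6 \<le> 0\<close> by (rule mult_left_mono_neg)
  finally show ?thesis .
qed

lemma product_plus_above_tangent:
  fixes j l x0 y0 :: real
  assumes "j \<in> {1..2}" "l \<in> {1..2}" "x0 \<in> {-1/2..1/2}" "y0 \<in> {-1/2..1/2}"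
  shows "\<exists>p q. \<forall>x\<in>{-1/2..1/2}. \<forall>y\<in>{-1/2..1/2}.
    (x0\<^sup>2 + j * x0 + 6) * (y0\<^sup>2 + l * y0 + 6) + p * (x - x0) + q * (y - y0)
      \<le> (x\<^sup>2 + j * x + 6) * (y\<^sup>2 + l * y + 6)"
proof (intro exI ballI)
  fix x y :: real assume "x \<in> {-1/2..1/2}" "y \<in> {-1/2..1/2}"
  then have "\<bar>1 * (x + x0) + j\<bar> \<le> 3" "\<bar>1 * (y + y0) + l\<bar> \<le> 3"
    using assms by (auto simp: abs_le_iff)
  moreover have "3\<^sup>2 \<le> 2 * 1 * (1 * x0\<^sup>2 + j * x0 + 6)" "3\<^sup>2 \<le> 2 * 1 * (1 * y0\<^sup>2 + l * y0 + 6)"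
    using quadratic_bounds_on_half_interval[of j x0] quadratic_bounds_on_half_interval[of l y0] assms
    by auto
  ultimately have "(1 * x0\<^sup>2 + j * x0 + 6) * (1 * y0\<^sup>2 + l * y0 + 6)
      + (2 * 1 * x0 + j) * (1 * y0\<^sup>2 + l * y0 + 6) * (x - x0)
      + (1 * x0\<^sup>2 + j * x0 + 6) * (2 * 1 * y0 + l) * (y - y0)
    \<le> (1 * x\<^sup>2 + j * x + 6) * (1 * y\<^sup>2 + l * y + 6)"
    by (rule quadratic_product_above_tangent)
  then show "(x0\<^sup>2 + j * x0 + 6) * (y0\<^sup>2 + l * y0 + 6)
      + (2 * x0 + j) * (y0\<^sup>2 + l * y0 + 6) * (x - x0) + (x0\<^sup>2 + j * x0 + 6) * (2 * y0 + l) * (y - y0)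
    \<le> (x\<^sup>2 + j * x + 6) * (y\<^sup>2 + l * y + 6)"
    by simp
qed

lemma product_minus_above_tangent:
  fixes j l x0 y0 :: real
  assumes "j \<in> {1..2}" "l \<in> {1..2}" "x0 \<in> {-1/2..1/2}" "y0 \<in> {-1/2..1/2}"
  shows "\<exists>p q. \<forall>x\<in>{-1/2..1/2}. \<forall>y\<in>{-1/2..1/2}.
    (x0\<^sup>2 + j * x0 - 6) * (- y0\<^sup>2 - l * y0 + 6) + p * (x - x0) + q * (y - y0)
      \<le> (x\<^sup>2 + j * x - 6) * (- y\<^sup>2 - l * y + 6)"
proof (intro exI ballI)
  fix x y :: real assume "x \<in> {-1/2..1/2}" "y \<in> {-1/2..1/2}"
  then have "\<bar>1 * (x + x0) + j\<bar> \<le> 3" "\<bar>-1 * (y + y0) + -l\<bar> \<le> 3"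
    using assms by (auto simp: abs_le_iff)
  moreover have "3\<^sup>2 \<le> 2 * -1 * (1 * x0\<^sup>2 + j * x0 + -6)" "3\<^sup>2 \<le> 2 * 1 * (-1 * y0\<^sup>2 + -l * y0 + 6)"
    using quadratic_bounds_on_half_interval[of j x0] quadratic_bounds_on_half_interval[of l y0] assms
    by auto
  ultimately have "(1 * x0\<^sup>2 + j * x0 + -6) * (-1 * y0\<^sup>2 + -l * y0 + 6)
      + (2 * 1 * x0 + j) * (-1 * y0\<^sup>2 + -l * y0 + 6) * (x - x0)
      + (1 * x0\<^sup>2 + j * x0 + -6) * (2 * -1 * y0 + -l) * (y - y0)
    \<le> (1 * x\<^sup>2 + j * x + -6) * (-1 * y\<^sup>2 + -l * y + 6)"
    by (rule quadratic_product_above_tangent)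
  then show "(x0\<^sup>2 + j * x0 - 6) * (- y0\<^sup>2 - l * y0 + 6)
      + (2 * x0 + j) * (- y0\<^sup>2 - l * y0 + 6) * (x - x0) + (x0\<^sup>2 + j * x0 - 6) * (- 2 * y0 - l) * (y - y0)
    \<le> (x\<^sup>2 + j * x - 6) * (- y\<^sup>2 - l * y + 6)"
    by simp
qed

theorem lemma3p1:
  fixes D :: "(complex^'n) set" and \<phi> \<psi> :: "complex^'n \<Rightarrow> real"
  assumes "open D"
    and "psh_on D \<phi>" and "psh_on D \<psi>"
    and "\<forall>z. \<bar>\<phi> z\<bar> \<le> 1/2" and "\<forall>z. \<bar>\<psi> z\<bar> \<le> 1/2"
    and "j \<in> {1,2::nat}" and "l \<in> {1,2::nat}"
  shows "psh_on {v. vfst v \<in> D \<and> vsnd v \<in> D}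
           (\<lambda>v. ((\<phi> (vfst v))\<^sup>2 + real j * \<phi> (vfst v) + 6) *
                ((\<psi> (vsnd v))\<^sup>2 + real l * \<psi> (vsnd v) + 6))
       \<and> psh_on {v. vfst v \<in> D \<and> vsnd v \<in> D}
           (\<lambda>v. ((\<phi> (vfst v))\<^sup>2 + real j * \<phi> (vfst v) - 6) *
                (- (\<psi> (vsnd v))\<^sup>2 - real l * \<psi> (vsnd v) + 6))"
proof -
  let ?E = "{v. vfst v \<in> D \<and> vsnd v \<in> D}"
  have jl: "real j \<in> {1..2}" "real l \<in> {1..2}"
    using assms(6,7) by auto
  have U: "psh_on ?E (\<lambda>v. \<phi> (vfst v))"
    by (rule psh_on_subset[OF psh_on_vfst[OF assms(2)]]) auto
  have W: "psh_on ?E (\<lambda>v. \<psi> (vsnd v))"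
    by (rule psh_on_subset[OF psh_on_vsnd[OF assms(3)]]) auto
  have range: "\<phi> (vfst v) \<in> {-1/2..1/2}" "\<psi> (vsnd v) \<in> {-1/2..1/2}" for v
    using assms(4)[rule_format, of "vfst v"] assms(5)[rule_format, of "vsnd v"]
    by (auto simp: abs_le_iff)
  show ?thesis
  proof
    show "psh_on ?E (\<lambda>v. ((\<phi> (vfst v))\<^sup>2 + real j * \<phi> (vfst v) + 6) *
                ((\<psi> (vsnd v))\<^sup>2 + real l * \<psi> (vsnd v) + 6))"
    proof (rule psh_on_monotone_comp[OF U W range,
          where F = "\<lambda>x y. (x\<^sup>2 + real j * x + 6) * (y\<^sup>2 + real l * y + 6)"])
      show "continuous_on UNIV (\<lambda>p. ((fst p)\<^sup>2 + real j * fst p + 6) * ((snd p)\<^sup>2 + real l * snd p + 6))"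
        by (intro continuous_intros)
    qed (simp_all only: product_plus_mono[OF jl] product_plus_above_tangent[OF jl])
    show "psh_on ?E (\<lambda>v. ((\<phi> (vfst v))\<^sup>2 + real j * \<phi> (vfst v) - 6) *
                (- (\<psi> (vsnd v))\<^sup>2 - real l * \<psi> (vsnd v) + 6))"
    proof (rule psh_on_monotone_comp[OF U W range,
          where F = "\<lambda>x y. (x\<^sup>2 + real j * x - 6) * (- y\<^sup>2 - real l * y + 6)"])
      show "continuous_on UNIV (\<lambda>p. ((fst p)\<^sup>2 + real j * fst p - 6) * (- (snd p)\<^sup>2 - real l * snd p + 6))"
        by (intro continuous_intros)
    qed (simp_all only: product_minus_mono[OF jl] product_minus_above_tangent[OF jl])
  qed
qed

end
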